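(* Let $q\in\mathscr{P}_2(\mathbb{R}^d)$ not give mass to small sets, and let $\psi:\mathbb{R}^d\to(-\infty,+\infty]$ be a proper, lower semicontinuous convex function. Define $\varphi^\psi(x)\coloneqq\inf_{p\in\mathscr{P}_2^x(\mathbb{R}^d)}\big(\int\psi\,dp-\mathrm{MCov}(p,q)\big)$ for $x\in\mathbb{R}^d$. Then: (i) the function $x\mapsto\varphi^\psi(x)$ is convex on $\operatorname{dom}\psi$; (ii) if $\varphi^\psi(x)>-\infty$ for some $x\in\operatorname{int}(\operatorname{dom}\psi)$, then $\varphi^\psi>-\infty$ on $\operatorname{int}(\operatorname{dom}\psi)$.
   Context: $\mathscr{P}_2(\mathbb{R}^d)$: Borel probability measures with finite second moment; $\mathscr{P}_2^x(\mathbb{R}^d)$: those with barycenter $\int y\,p(dy)=x$. $q$ does not give mass to small sets: $q(A)=0$ for measurable $A$ of Hausdorff dimension $\le d-1$. $\mathrm{MCov}(p,q)\coloneqq\sup_{\tilde\pi\in\mathsf{Cpl}(p,q)}\int\langle y,z\rangle\,d\tilde\pi$ over couplings. $\operatorname{dom}\psi=\{\psi<+\infty\}$; proper means $\operatorname{dom}\psi\neq\varnothing$. *)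

theory Defs
  imports "HOL-Probability.Probability"
begin

text \<open>Ambient space: R^d is modelled by a Euclidean space type 'a with d = DIM('a).\<close>

definition P2 :: "'a::euclidean_space measure set" where
  "P2 = {p. prob_space p \<and> sets p = sets borel \<and> integrable p (\<lambda>y. (norm y)^2)}"

definition P2x :: "'a::euclidean_space \<Rightarrow> 'a measure set" where
  "P2x x = {p \<in> P2. integrable p (\<lambda>y. y) \<and> (\<integral>y. y \<partial>p) = x}"

definition Cpl :: "'a::euclidean_space measure \<Rightarrow> 'a measure \<Rightarrow> ('a \<times> 'a) measure set" where
  "Cpl p q = {\<pi>. prob_space \<pi> \<and> sets \<pi> = sets (borel :: ('a \<times> 'a) measure)
                 \<and> distr \<pi> borel fst = p \<and> distr \<pi> borel snd = q}"

definition MCov :: "'a::euclidean_space measure \<Rightarrow> 'a measure \<Rightarrow> real" where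
  "MCov p q = Sup ((\<lambda>\<pi>. \<integral>yz. fst yz \<bullet> snd yz \<partial>\<pi>) ` Cpl p q)"

definition ext_integral :: "'a measure \<Rightarrow> ('a \<Rightarrow> ereal) \<Rightarrow> ereal" where
  "ext_integral M f = enn2ereal (\<integral>\<^sup>+x. e2ennreal (f x) \<partial>M) - enn2ereal (\<integral>\<^sup>+x. e2ennreal (- f x) \<partial>M)"

definition hausdorff_measure :: "real \<Rightarrow> 'a::euclidean_space set \<Rightarrow> ennreal" where
  "hausdorff_measure s A =
     (SUP \<delta>\<in>{0<..}. INF C\<in>{C :: nat \<Rightarrow> 'a set. A \<subseteq> (\<Union>i. C i) \<and> (\<forall>i. bounded (C i) \<and> diameter (C i) \<le> \<delta>)}.
        (\<Sum>i. ennreal (diameter (C i) powr s)))"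

definition hausdorff_dim :: "'a::euclidean_space set \<Rightarrow> ereal" where
  "hausdorff_dim A = Inf (ereal ` {s. s > 0 \<and> hausdorff_measure s A = 0})"

definition no_mass_small_sets :: "'a::euclidean_space measure \<Rightarrow> bool" where
  "no_mass_small_sets q \<longleftrightarrow>
     (\<forall>A \<in> sets borel. hausdorff_dim A \<le> ereal (real DIM('a) - 1) \<longrightarrow> emeasure q A = 0)"

definition ext_convex :: "('a::real_vector \<Rightarrow> ereal) \<Rightarrow> bool" where
  "ext_convex f \<longleftrightarrow> (\<forall>x y t. 0 < t \<and> t < 1 \<longrightarrow>
      f ((1 - t) *\<^sub>R x + t *\<^sub>R y) \<le> ereal (1 - t) * f x + ereal t * f y)"

definition ext_lsc :: "('a::topological_space \<Rightarrow> ereal) \<Rightarrow> bool" where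
  "ext_lsc f \<longleftrightarrow> (\<forall>x. f x \<le> Liminf (at x) f)"

definition edom :: "('a \<Rightarrow> ereal) \<Rightarrow> 'a set" where
  "edom f = {x. f x < \<infinity>}"

definition ext_convex_on :: "'a::real_vector set \<Rightarrow> ('a \<Rightarrow> ereal) \<Rightarrow> bool" where
  "ext_convex_on S f \<longleftrightarrow> convex S \<and> convex {(x, t::real). x \<in> S \<and> f x \<le> ereal t}"

definition phi :: "('a::euclidean_space \<Rightarrow> ereal) \<Rightarrow> 'a measure \<Rightarrow> 'a \<Rightarrow> ereal" where
  "phi \<psi> q x = (INF p\<in>P2x x. ext_integral p \<psi> - ereal (MCov p q))"

end

theory Submission
  imports Defs
begin

text \<open>
  Along mixtures the barycenter
  is affine, \<open>\<integral>\<psi>\<close> is convex, and \<open>MCov(\<cdot>, q)\<close> is concave, because mixing couplings of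
  \<open>p0\<close> and \<open>p1\<close> with \<open>q\<close> gives a coupling of the mixture with \<open>q\<close>. Hence the objective
  \<open>\<integral>\<psi> dp - MCov(p, q)\<close> is convex along mixtures, and its infimum over \<open>P2x x\<close> is convex
  in \<open>x\<close> on all of \<open>R^d\<close>. Dirac masses give \<open>\<phi>\<^sup>\<psi> \<le> \<psi> - MCov(\<delta>\<^sub>x, q) < \<infinity>\<close> on \<open>dom \<psi>\<close>,
  and a convex function that is \<open>< \<infinity>\<close> near a point \<open>x0\<close> with \<open>\<phi>(x0) > -\<infinity>\<close> never takes
  the value \<open>-\<infinity>\<close>.
  Lower semicontinuity of \<open>\<psi>\<close> is only used to make it Borel.
\<close>

lemma convex_comb_cSUP_le:
  fixes f :: "'i \<Rightarrow> real" and g :: "'j \<Rightarrow> real"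
  assumes "I \<noteq> {}" "J \<noteq> {}" and t: "0 < t" "t < 1"
    and le: "\<And>i j. i \<in> I \<Longrightarrow> j \<in> J \<Longrightarrow> (1 - t) * f i + t * g j \<le> c"
  shows "(1 - t) * (SUP i\<in>I. f i) + t * (SUP j\<in>J. g j) \<le> c"
proof -
  have "(SUP j\<in>J. g j) \<le> (c - (1 - t) * f i) / t" if "i \<in> I" for i
    using \<open>J \<noteq> {}\<close> le[OF that] t by (intro cSUP_least) (auto simp: field_simps)
  then have "(SUP i\<in>I. f i) \<le> (c - t * (SUP j\<in>J. g j)) / (1 - t)"
    using \<open>I \<noteq> {}\<close> t by (intro cSUP_least) (auto simp: field_simps)
  then show ?thesis
    using t by (simp add: field_simps)
qed

lemma bij_ereal_affine:
  assumes "0 < s"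
  shows "bij (\<lambda>x::ereal. ereal r + ereal s * x)"
proof -
  have "(ereal r + ereal s * x - ereal r) / ereal s = x" for x
    using assms by (cases x) auto
  moreover have "ereal r + ereal s * ((y - ereal r) / ereal s) = y" for y
    using assms by (cases y) auto
  ultimately show ?thesis
    by (intro bij_betw_byWitness[where f' = "\<lambda>y. (y - ereal r) / ereal s"]) auto
qed

lemma le_add_scaled_INF:
  fixes a c :: ereal and g :: "'i \<Rightarrow> ereal"
  assumes s: "0 < s" and le: "\<And>j. j \<in> J \<Longrightarrow> c \<le> a + ereal s * g j"
  shows "c \<le> a + ereal s * (INF j\<in>J. g j)"
proof (cases a)
  case (real r)
  have "mono (\<lambda>x. ereal r + ereal s * x)"
    using s by (intro monoI add_left_mono ereal_mult_left_mono) auto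
  then have "ereal r + ereal s * (INF j\<in>J. g j) = (INF j\<in>J. ereal r + ereal s * g j)"
    using bij_ereal_affine[OF s] by (subst mono_bij_Inf) (simp_all add: image_comp)
  then show ?thesis
    using le real by (auto intro: INF_greatest)
next
  case MInf
  show ?thesis
  proof (cases "\<exists>j\<in>J. g j \<noteq> \<infinity>")
    case True
    then obtain j where "j \<in> J" "g j \<noteq> \<infinity>" by blast
    then have "c = -\<infinity>"
      using le[of j] MInf s by (cases "g j") auto
    then show ?thesis by simp
  next
    case False
    then have "(INF j\<in>J. g j) = \<infinity>"
      by (metis (mono_tags) INF_top_conv top_ereal_def)
    then show ?thesis using s by simp
  qed
qed simp

lemma le_convex_comb_INF:
  fixes c :: ereal and f :: "'i \<Rightarrow> ereal" and g :: "'j \<Rightarrow> ereal"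
  assumes t: "0 < t" "t < 1"
    and le: "\<And>i j. i \<in> I \<Longrightarrow> j \<in> J \<Longrightarrow> c \<le> ereal (1 - t) * f i + ereal t * g j"
  shows "c \<le> ereal (1 - t) * (INF i\<in>I. f i) + ereal t * (INF j\<in>J. g j)"
proof -
  have "c \<le> ereal t * (INF j\<in>J. g j) + ereal (1 - t) * f i" if "i \<in> I" for i
    using le_add_scaled_INF[of t J c "ereal (1 - t) * f i" g] le[OF that] t by (simp add: add.commute)
  then show ?thesis
    using le_add_scaled_INF[of "1 - t" I c "ereal t * (INF j\<in>J. g j)" f] t by (simp add: add.commute)
qed

lemma enn2ereal_diff_mix_le:
  fixes A0 A1 B0 B1 :: ennreal
  assumes "0 < t" "t < 1"
  shows "enn2ereal (A0 * ennreal (1 - t) + A1 * ennreal t) - enn2ereal (B0 * ennreal (1 - t) + B1 * ennreal t)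
    \<le> ereal (1 - t) * (enn2ereal A0 - enn2ereal B0) + ereal t * (enn2ereal A1 - enn2ereal B1)"
  using assms
  by (cases A0 rule: ennreal_cases; cases A1 rule: ennreal_cases;
      cases B0 rule: ennreal_cases; cases B1 rule: ennreal_cases)
     (simp_all add: ennreal_mult_top ennreal_top_mult ennreal_mult[symmetric] ennreal_plus[symmetric]
        del: ennreal_plus, simp_all add: algebra_simps)

lemma ereal_convex_comb_diff_le:
  fixes E0 E1 :: ereal
  assumes "0 < t" "t < 1"
  shows "ereal (1 - t) * E0 + ereal t * E1 - ereal ((1 - t) * c0 + t * c1)
    \<le> ereal (1 - t) * (E0 - ereal c0) + ereal t * (E1 - ereal c1)"
  using assms by (cases E0; cases E1) (simp_all add: algebra_simps)

lemma convexI_open_combinations: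
  assumes "\<And>x y u. x \<in> S \<Longrightarrow> y \<in> S \<Longrightarrow> 0 < u \<Longrightarrow> u < 1 \<Longrightarrow> (1 - u) *\<^sub>R x + u *\<^sub>R y \<in> S"
  shows "convex S"
  using assms by (auto simp: convex_contains_open_segment in_segment)

lemma convex_edom:
  assumes "ext_convex f"
  shows "convex (edom f)"
proof (rule convexI_open_combinations)
  fix x y u assume "x \<in> edom f" "y \<in> edom f" "0 < (u::real)" "u < 1"
  then have "ereal (1 - u) * f x + ereal u * f y < \<infinity>"
    by (cases "f x"; cases "f y") (simp_all add: edom_def)
  moreover have "f ((1 - u) *\<^sub>R x + u *\<^sub>R y) \<le> ereal (1 - u) * f x + ereal u * f y"
    using assms \<open>0 < u\<close> \<open>u < 1\<close> by (simp add: ext_convex_def)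
  ultimately have "f ((1 - u) *\<^sub>R x + u *\<^sub>R y) < \<infinity>"
    by (rule le_less_trans[rotated])
  then show "(1 - u) *\<^sub>R x + u *\<^sub>R y \<in> edom f"
    by (simp add: edom_def)
qed

lemma ext_convex_imp_ext_convex_on:
  assumes f: "ext_convex f" and S: "convex S"
  shows "ext_convex_on S f"
  unfolding ext_convex_on_def
proof (intro conjI S convexI_open_combinations, clarsimp)
  fix x s y r and u :: real
  assume "x \<in> S" "f x \<le> ereal s" "y \<in> S" "f y \<le> ereal r" and u: "0 < u" "u < 1"
  have "f ((1 - u) *\<^sub>R x + u *\<^sub>R y) \<le> ereal (1 - u) * f x + ereal u * f y"
    using f u by (simp add: ext_convex_def)
  also have "\<dots> \<le> ereal (1 - u) * ereal s + ereal u * ereal r"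
    using \<open>f x \<le> ereal s\<close> \<open>f y \<le> ereal r\<close> u by (intro add_mono ereal_mult_left_mono) auto
  finally show "(1 - u) *\<^sub>R x + u *\<^sub>R y \<in> S \<and> f ((1 - u) *\<^sub>R x + u *\<^sub>R y) \<le> ereal ((1 - u) * s + u * r)"
    using S \<open>x \<in> S\<close> \<open>y \<in> S\<close> u by (simp add: convex_alt)
qed

lemma ext_convex_greater_MInfty:
  fixes f :: "'a::real_normed_vector \<Rightarrow> ereal"
  assumes f: "ext_convex f" and x0: "x0 \<in> interior (edom f)" "f x0 > -\<infinity>"
  shows "f x > -\<infinity>"
proof (rule ccontr)
  \<comment> \<open>x0 lies strictly between x and a point y of the domain beyond x0,
    so f x = -\<infinity> would force f x0 = -\<infinity>.\<close>
  assume "\<not> f x > -\<infinity>"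
  then have fx: "f x = -\<infinity>" by simp
  with x0 have "x \<noteq> x0" by auto
  obtain e where e: "e > 0" "ball x0 e \<subseteq> edom f"
    using x0 by (auto simp: mem_interior)
  define d where "d = e / (2 * norm (x0 - x))"
  define y where "y = x0 + d *\<^sub>R (x0 - x)"
  define t where "t = 1 / (1 + d)"
  have d: "d > 0"
    using e \<open>x \<noteq> x0\<close> by (simp add: d_def)
  have "dist x0 y = e / 2"
    using \<open>x \<noteq> x0\<close> e by (simp add: y_def d_def dist_norm)
  then have "y \<in> edom f"
    using e by auto
  then have "f y < \<infinity>"
    by (simp add: edom_def)
  have t: "0 < t" "t < 1"
    using d by (simp_all add: t_def)
  have "(1 - t) *\<^sub>R x + t *\<^sub>R y = t *\<^sub>R ((1 + d) *\<^sub>R x0)"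
    using d by (simp add: t_def y_def field_simps algebra_simps)
  then have "(1 - t) *\<^sub>R x + t *\<^sub>R y = x0"
    using d by (simp add: t_def)
  then have "f x0 \<le> ereal (1 - t) * f x + ereal t * f y"
    using f t unfolding ext_convex_def by metis
  also have "\<dots> = -\<infinity>"
    using fx t \<open>f y < \<infinity>\<close> by (cases "f y") auto
  finally show False
    using x0 by simp
qed

lemma ext_lsc_open_superlevel:
  assumes "ext_lsc f"
  shows "open {x. a < f x}"
proof (subst open_subopen, intro ballI)
  fix x assume "x \<in> {x. a < f x}"
  moreover have "f x \<le> Liminf (at x) f"
    using assms by (simp add: ext_lsc_def)
  ultimately have "eventually (\<lambda>y. a < f y) (at x)"
    by (simp add: le_Liminf_iff)
  then obtain S where "open S" "x \<in> S" "\<forall>y\<in>S. y \<noteq> x \<longrightarrow> a < f y"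
    unfolding eventually_at_topological by auto
  then show "\<exists>T. open T \<and> x \<in> T \<and> T \<subseteq> {x. a < f x}"
    using \<open>x \<in> {x. a < f x}\<close> by (intro exI[of _ S]) auto
qed

lemma ext_lsc_borel_measurable:
  fixes f :: "'a::topological_space \<Rightarrow> ereal"
  assumes "ext_lsc f"
  shows "f \<in> borel_measurable borel"
  unfolding borel_measurable_ereal_iff_Ioi
  using ext_lsc_open_superlevel[OF assms] by (auto simp: vimage_def)

section \<open>Mixtures of probability measures\<close>

definition mix_measure :: "real \<Rightarrow> 'b measure \<Rightarrow> 'b measure \<Rightarrow> 'b measure" where
  "mix_measure t M N = measure_pmf (bernoulli_pmf t) \<bind> (\<lambda>b. if b then N else M)"

lemma mix_measure_same:
  assumes "prob_space M"
  shows "mix_measure t M M = M"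
  unfolding mix_measure_def
  using assms by (simp add: bind_const' prob_space_imp_subprob_space prob_space_measure_pmf)

locale measure_mixture =
  fixes M N :: "'b measure" and t :: real
  assumes prob_M: "prob_space M" and prob_N: "prob_space N" and sets_N: "sets N = sets M"
    and t_nonneg: "0 \<le> t" and t_le_1: "t \<le> 1"
begin

lemma measurable_mixture_kernel:
  "(\<lambda>b. if b then N else M) \<in> measure_pmf (bernoulli_pmf t) \<rightarrow>\<^sub>M prob_algebra M"
  using prob_M prob_N sets_N by (auto simp: space_prob_algebra)

lemma sets_mix_measure [simp]: "sets (mix_measure t M N) = sets M"
  unfolding mix_measure_def using sets_N by (subst sets_bind) auto

lemma prob_space_mix_measure: "prob_space (mix_measure t M N)"
  unfolding mix_measure_def
  by (rule prob_space_bind'[OF _ measurable_mixture_kernel]) (simp add: space_prob_algebra prob_space_measure_pmf)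

lemma nn_integral_mix_measure:
  "f \<in> borel_measurable M \<Longrightarrow>
   (\<integral>\<^sup>+x. f x \<partial>mix_measure t M N) = (\<integral>\<^sup>+x. f x \<partial>M) * (1 - t) + (\<integral>\<^sup>+x. f x \<partial>N) * t"
  unfolding mix_measure_def using t_nonneg t_le_1 measurable_mixture_kernel
  by (subst nn_integral_bind[OF _ measurable_prob_algebraD]) (auto simp: add.commute)

lemma distr_mix_measure:
  assumes g: "g \<in> M \<rightarrow>\<^sub>M K"
  shows "distr (mix_measure t M N) K g = mix_measure t (distr M K g) (distr N K g)"
  unfolding mix_measure_def
  by (subst distr_bind[OF measurable_prob_algebraD[OF measurable_mixture_kernel] _ g])
     (simp_all add: if_distrib[of "\<lambda>M. distr M K g"])

lemma integrable_mix_measure: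
  fixes f :: "'b \<Rightarrow> 'c::{banach, second_countable_topology}"
  assumes "integrable M f" "integrable N f"
  shows "integrable (mix_measure t M N) f"
proof -
  have f: "f \<in> borel_measurable M" using assms by auto
  have "(\<integral>\<^sup>+x. norm (f x) \<partial>M) < \<infinity>" "(\<integral>\<^sup>+x. norm (f x) \<partial>N) < \<infinity>"
    using assms by (simp_all add: integrable_iff_bounded)
  then have "(\<integral>\<^sup>+x. norm (f x) \<partial>mix_measure t M N) < \<infinity>"
    using f by (simp add: nn_integral_mix_measure ennreal_mult_less_top ennreal_add_less_top)
  then show ?thesis
    using f by (simp add: integrable_iff_bounded measurable_cong_sets[OF sets_mix_measure refl])
qed

lemma integral_mix_measure:
  fixes f :: "'b \<Rightarrow> real"
  assumes "integrable M f" "integrable N f"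
  shows "(\<integral>x. f x \<partial>mix_measure t M N) = (1 - t) * (\<integral>x. f x \<partial>M) + t * (\<integral>x. f x \<partial>N)"
proof -
  have f: "f \<in> borel_measurable M" using assms by auto
  have "(\<integral>\<^sup>+x. ennreal (f x) \<partial>M) < \<infinity>" "(\<integral>\<^sup>+x. ennreal (f x) \<partial>N) < \<infinity>"
     "(\<integral>\<^sup>+x. ennreal (- f x) \<partial>M) < \<infinity>" "(\<integral>\<^sup>+x. ennreal (- f x) \<partial>N) < \<infinity>"
    using assms by (auto simp: real_integrable_def top.not_eq_extremum)
  then show ?thesis
    using t_nonneg t_le_1 f
    unfolding real_lebesgue_integral_def[OF integrable_mix_measure[OF assms]]
      real_lebesgue_integral_def[OF assms(1)] real_lebesgue_integral_def[OF assms(2)]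
    by (simp add: nn_integral_mix_measure enn2real_plus ennreal_mult_less_top enn2real_mult algebra_simps)
qed

lemma ext_integral_mix_measure_le:
  assumes f: "f \<in> borel_measurable M" and t: "0 < t" "t < 1"
  shows "ext_integral (mix_measure t M N) f \<le> ereal (1 - t) * ext_integral M f + ereal t * ext_integral N f"
proof -
  have m: "(\<lambda>x. e2ennreal (f x)) \<in> borel_measurable M" "(\<lambda>x. e2ennreal (- f x)) \<in> borel_measurable M"
    using f by measurable
  show ?thesis
    unfolding ext_integral_def nn_integral_mix_measure[OF m(1)] nn_integral_mix_measure[OF m(2)]
    by (rule enn2ereal_diff_mix_le[OF t])
qed

end

lemma ext_integral_return:
  assumes "f \<in> borel_measurable M" "x \<in> space M"
  shows "ext_integral (return M x) f = f x"
  using assms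
  by (cases "f x" rule: ereal_cases; cases "0 \<le> real_of_ereal (f x)")
     (simp_all add: ext_integral_def nn_integral_return e2ennreal_neg ennreal_neg zero_ennreal.rep_eq)

section \<open>Measures with finite second moment and their couplings\<close>

lemma measure_mixture_P2:
  "p0 \<in> P2 \<Longrightarrow> p1 \<in> P2 \<Longrightarrow> 0 \<le> t \<Longrightarrow> t \<le> 1 \<Longrightarrow> measure_mixture p0 p1 t"
  by (intro measure_mixture.intro) (simp_all add: P2_def)

lemma mix_measure_in_P2:
  assumes "p0 \<in> P2" "p1 \<in> P2" "0 \<le> t" "t \<le> 1"
  shows "mix_measure t p0 p1 \<in> P2"
proof -
  interpret measure_mixture p0 p1 t using assms by (rule measure_mixture_P2)
  show ?thesis
    using assms prob_space_mix_measure by (simp add: P2_def integrable_mix_measure)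
qed

lemma mix_measure_in_P2x:
  fixes x y :: "'a::euclidean_space"
  assumes p0: "p0 \<in> P2x x" and p1: "p1 \<in> P2x y" and t: "0 \<le> t" "t \<le> 1"
  shows "mix_measure t p0 p1 \<in> P2x ((1 - t) *\<^sub>R x + t *\<^sub>R y)"
proof -
  have P2: "p0 \<in> P2" "p1 \<in> P2" and int: "integrable p0 (\<lambda>z. z)" "integrable p1 (\<lambda>z. z)"
    and bary: "(\<integral>z. z \<partial>p0) = x" "(\<integral>z. z \<partial>p1) = y"
    using p0 p1 by (auto simp: P2x_def)
  interpret measure_mixture p0 p1 t using P2 t by (rule measure_mixture_P2)
  have int_mix: "integrable (mix_measure t p0 p1) (\<lambda>z. z)"
    using int by (rule integrable_mix_measure)
  have "(\<integral>z. z \<partial>mix_measure t p0 p1) \<bullet> b = ((1 - t) *\<^sub>R x + t *\<^sub>R y) \<bullet> b" for b :: 'a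
  proof -
    have "(\<integral>z. z \<partial>mix_measure t p0 p1) \<bullet> b = (\<integral>z. z \<bullet> b \<partial>mix_measure t p0 p1)"
      using int_mix by simp
    also have "\<dots> = (1 - t) * (\<integral>z. z \<bullet> b \<partial>p0) + t * (\<integral>z. z \<bullet> b \<partial>p1)"
      using int by (intro integral_mix_measure) auto
    finally show ?thesis
      using int bary by (simp add: inner_add_left)
  qed
  then have "(\<integral>z. z \<partial>mix_measure t p0 p1) = (1 - t) *\<^sub>R x + t *\<^sub>R y"
    by (rule euclidean_eqI)
  then show ?thesis
    using mix_measure_in_P2[OF P2 t] int_mix by (simp add: P2x_def)
qed

lemma return_in_P2x: "return borel x \<in> P2x (x::'a::euclidean_space)"
  by (simp add: P2x_def P2_def prob_space_return integrable_iff_bounded nn_integral_return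
      integral_return[where g = "\<lambda>z. z"])

lemma borel_measurable_fst: "fst \<in> borel_measurable (borel :: ('a::euclidean_space \<times> 'a) measure)"
  and borel_measurable_snd: "snd \<in> borel_measurable (borel :: ('a \<times> 'a) measure)"
  by (intro borel_measurable_continuous_onI continuous_intros)+

lemma abs_inner_le_half_sum_squares:
  fixes a b :: "'a::real_inner"
  shows "\<bar>a \<bullet> b\<bar> \<le> ((norm a)\<^sup>2 + (norm b)\<^sup>2) / 2"
  using Cauchy_Schwarz_ineq2[of a b] sum_squares_bound[of "norm a" "norm b"] by simp

lemma Cpl_inner_bounded:
  fixes p q :: "'a::euclidean_space measure"
  assumes p: "p \<in> P2" and q: "q \<in> P2" and \<pi>: "\<pi> \<in> Cpl p q"
  shows "integrable \<pi> (\<lambda>z. fst z \<bullet> snd z)"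
    and "(\<integral>z. fst z \<bullet> snd z \<partial>\<pi>) \<le> ((\<integral>y. (norm y)\<^sup>2 \<partial>p) + (\<integral>y. (norm y)\<^sup>2 \<partial>q)) / 2"
proof -
  have sets: "sets \<pi> = sets (borel :: ('a \<times> 'a) measure)"
    and marg: "distr \<pi> borel fst = p" "distr \<pi> borel snd = q"
    using \<pi> by (auto simp: Cpl_def)
  have fst: "fst \<in> borel_measurable \<pi>" and snd: "snd \<in> borel_measurable \<pi>"
    using borel_measurable_fst borel_measurable_snd by (simp_all add: measurable_cong_sets[OF sets refl])
  have "integrable \<pi> (\<lambda>z. (norm (fst z))\<^sup>2)" "integrable \<pi> (\<lambda>z. (norm (snd z))\<^sup>2)"
    using p q marg integrable_distr_eq[OF fst, of "\<lambda>y. (norm y)\<^sup>2"] integrable_distr_eq[OF snd, of "\<lambda>y. (norm y)\<^sup>2"]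
    by (simp_all add: P2_def)
  then have bound: "integrable \<pi> (\<lambda>z. ((norm (fst z))\<^sup>2 + (norm (snd z))\<^sup>2) / 2)"
    by simp
  show int: "integrable \<pi> (\<lambda>z. fst z \<bullet> snd z)"
    using bound fst snd abs_inner_le_half_sum_squares
    by (intro Bochner_Integration.integrable_bound[OF bound]) (auto intro: borel_measurable_inner)
  have "(\<integral>z. fst z \<bullet> snd z \<partial>\<pi>) \<le> (\<integral>z. ((norm (fst z))\<^sup>2 + (norm (snd z))\<^sup>2) / 2 \<partial>\<pi>)"
    using int bound by (rule integral_mono) (metis abs_le_D1 abs_inner_le_half_sum_squares)
  also have "\<dots> = ((\<integral>y. (norm y)\<^sup>2 \<partial>p) + (\<integral>y. (norm y)\<^sup>2 \<partial>q)) / 2"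
    using \<open>integrable \<pi> (\<lambda>z. (norm (fst z))\<^sup>2)\<close> \<open>integrable \<pi> (\<lambda>z. (norm (snd z))\<^sup>2)\<close> marg
      integral_distr[OF fst, of "\<lambda>y. (norm y)\<^sup>2"] integral_distr[OF snd, of "\<lambda>y. (norm y)\<^sup>2"]
    by simp
  finally show "(\<integral>z. fst z \<bullet> snd z \<partial>\<pi>) \<le> ((\<integral>y. (norm y)\<^sup>2 \<partial>p) + (\<integral>y. (norm y)\<^sup>2 \<partial>q)) / 2" .
qed

lemma pair_measure_in_Cpl:
  fixes p q :: "'a::euclidean_space measure"
  assumes p: "prob_space p" "sets p = sets borel" and q: "prob_space q" "sets q = sets borel"
  shows "p \<Otimes>\<^sub>M q \<in> Cpl p q"
proof -
  interpret p: prob_space p by (rule p(1))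
  interpret q: prob_space q by (rule q(1))
  interpret pq: pair_prob_space p q ..
  interpret qp: pair_prob_space q p ..
  have sets: "sets (p \<Otimes>\<^sub>M q) = sets (borel :: ('a \<times> 'a) measure)"
    using sets_pair_measure_cong[OF p(2) q(2)] borel_prod by metis
  have "distr (p \<Otimes>\<^sub>M q) borel fst = distr (p \<Otimes>\<^sub>M q) p fst"
    using p(2) by (intro distr_cong) auto
  moreover have "distr (p \<Otimes>\<^sub>M q) borel snd = distr (p \<Otimes>\<^sub>M q) q snd"
    using q(2) by (intro distr_cong) auto
  moreover have "distr (p \<Otimes>\<^sub>M q) q snd = q"
  proof -
    have "distr (p \<Otimes>\<^sub>M q) q snd = distr (distr (p \<Otimes>\<^sub>M q) (q \<Otimes>\<^sub>M p) (\<lambda>(x, y). (y, x))) q fst"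
      by (subst distr_distr) (auto simp: comp_def case_prod_beta)
    also have "\<dots> = q"
      by (simp add: qp.distr_pair_swap[symmetric] p.distr_pair_fst)
    finally show ?thesis .
  qed
  ultimately show ?thesis
    unfolding Cpl_def using sets pq.prob_space_axioms q.distr_pair_fst by simp
qed

lemma integral_inner_le_MCov:
  fixes p q :: "'a::euclidean_space measure"
  assumes "p \<in> P2" "q \<in> P2" "\<pi> \<in> Cpl p q"
  shows "(\<integral>z. fst z \<bullet> snd z \<partial>\<pi>) \<le> MCov p q"
proof -
  have "bdd_above ((\<lambda>\<pi>. \<integral>z. fst z \<bullet> snd z \<partial>\<pi>) ` Cpl p q)"
    using Cpl_inner_bounded(2)[OF assms(1,2)] by (intro bdd_aboveI2)
  then show ?thesis
    unfolding MCov_def using assms(3) by (intro cSup_upper) auto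
qed

lemma mix_measure_in_Cpl:
  fixes p0 p1 q :: "'a::euclidean_space measure"
  assumes \<pi>0: "\<pi>0 \<in> Cpl p0 q" and \<pi>1: "\<pi>1 \<in> Cpl p1 q" and t: "0 \<le> t" "t \<le> 1"
  shows "mix_measure t \<pi>0 \<pi>1 \<in> Cpl (mix_measure t p0 p1) q"
proof -
  have sets: "sets \<pi>0 = sets (borel :: ('a \<times> 'a) measure)"
    using \<pi>0 by (simp add: Cpl_def)
  interpret measure_mixture \<pi>0 \<pi>1 t
    using \<pi>0 \<pi>1 t by (intro measure_mixture.intro) (simp_all add: Cpl_def)
  have fst: "fst \<in> \<pi>0 \<rightarrow>\<^sub>M borel" and snd: "snd \<in> \<pi>0 \<rightarrow>\<^sub>M borel"
    using borel_measurable_fst borel_measurable_snd by (simp_all add: measurable_cong_sets[OF sets refl])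
  have "prob_space q"
    using \<pi>0 prob_space.prob_space_distr[OF prob_M snd] by (simp add: Cpl_def)
  then show ?thesis
    using \<pi>0 \<pi>1 prob_space_mix_measure mix_measure_same distr_mix_measure[OF fst] distr_mix_measure[OF snd]
    by (simp add: Cpl_def)
qed

lemma MCov_mix_measure_ge:
  fixes p0 p1 q :: "'a::euclidean_space measure"
  assumes p: "p0 \<in> P2" "p1 \<in> P2" and q: "q \<in> P2" and t: "0 < t" "t < 1"
  shows "(1 - t) * MCov p0 q + t * MCov p1 q \<le> MCov (mix_measure t p0 p1) q"
  unfolding MCov_def[of p0] MCov_def[of p1]
proof (rule convex_comb_cSUP_le)
  show "Cpl p0 q \<noteq> {}" "Cpl p1 q \<noteq> {}"
    using p q pair_measure_in_Cpl[of p0 q] pair_measure_in_Cpl[of p1 q] by (auto simp: P2_def)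
  fix \<pi>0 \<pi>1 assume \<pi>: "\<pi>0 \<in> Cpl p0 q" "\<pi>1 \<in> Cpl p1 q"
  interpret measure_mixture \<pi>0 \<pi>1 t
    using \<pi> t by (intro measure_mixture.intro) (simp_all add: Cpl_def)
  have "(1 - t) * (\<integral>z. fst z \<bullet> snd z \<partial>\<pi>0) + t * (\<integral>z. fst z \<bullet> snd z \<partial>\<pi>1)
      = (\<integral>z. fst z \<bullet> snd z \<partial>mix_measure t \<pi>0 \<pi>1)"
    using Cpl_inner_bounded(1)[OF p(1) q \<pi>(1)] Cpl_inner_bounded(1)[OF p(2) q \<pi>(2)]
    by (simp add: integral_mix_measure)
  also have "\<dots> \<le> MCov (mix_measure t p0 p1) q"
    using mix_measure_in_P2[OF p] mix_measure_in_Cpl[OF \<pi>] q t by (intro integral_inner_le_MCov) auto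
  finally show "(1 - t) * (\<integral>z. fst z \<bullet> snd z \<partial>\<pi>0) + t * (\<integral>z. fst z \<bullet> snd z \<partial>\<pi>1)
      \<le> MCov (mix_measure t p0 p1) q" .
qed (use t in auto)

section \<open>Convexity of the value function\<close>

definition phi_objective :: "('a::euclidean_space \<Rightarrow> ereal) \<Rightarrow> 'a measure \<Rightarrow> 'a measure \<Rightarrow> ereal" where
  "phi_objective \<psi> q p = ext_integral p \<psi> - ereal (MCov p q)"

lemma phi_eq_INF_phi_objective: "phi \<psi> q x = (INF p\<in>P2x x. phi_objective \<psi> q p)"
  by (simp add: phi_def phi_objective_def)

lemma phi_objective_mix_measure_le:
  fixes \<psi> :: "'a::euclidean_space \<Rightarrow> ereal"
  assumes p: "p0 \<in> P2" "p1 \<in> P2" and q: "q \<in> P2" and t: "0 < t" "t < 1"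
    and \<psi>: "\<psi> \<in> borel_measurable borel"
  shows "phi_objective \<psi> q (mix_measure t p0 p1)
    \<le> ereal (1 - t) * phi_objective \<psi> q p0 + ereal t * phi_objective \<psi> q p1"
proof -
  interpret measure_mixture p0 p1 t
    using p t by (intro measure_mixture_P2) auto
  have "sets p0 = sets borel"
    using p by (simp add: P2_def)
  then have "\<psi> \<in> borel_measurable p0"
    using \<psi> by (simp add: measurable_cong_sets[OF \<open>sets p0 = sets borel\<close> refl])
  then have "ext_integral (mix_measure t p0 p1) \<psi> \<le> ereal (1 - t) * ext_integral p0 \<psi> + ereal t * ext_integral p1 \<psi>"
    using t by (rule ext_integral_mix_measure_le)
  moreover have "ereal ((1 - t) * MCov p0 q + t * MCov p1 q) \<le> ereal (MCov (mix_measure t p0 p1) q)"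
    using MCov_mix_measure_ge[OF p q t] by simp
  ultimately have "phi_objective \<psi> q (mix_measure t p0 p1)
      \<le> ereal (1 - t) * ext_integral p0 \<psi> + ereal t * ext_integral p1 \<psi> - ereal ((1 - t) * MCov p0 q + t * MCov p1 q)"
    unfolding phi_objective_def by (rule ereal_minus_mono)
  also have "\<dots> \<le> ereal (1 - t) * phi_objective \<psi> q p0 + ereal t * phi_objective \<psi> q p1"
    unfolding phi_objective_def using t by (rule ereal_convex_comb_diff_le)
  finally show ?thesis .
qed

lemma ext_convex_phi:
  fixes \<psi> :: "'a::euclidean_space \<Rightarrow> ereal"
  assumes q: "q \<in> P2" and \<psi>: "\<psi> \<in> borel_measurable borel"
  shows "ext_convex (phi \<psi> q)"
  unfolding ext_convex_def
proof (intro allI impI, elim conjE)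
  fix x y :: 'a and t :: real
  assume t: "0 < t" "t < 1"
  show "phi \<psi> q ((1 - t) *\<^sub>R x + t *\<^sub>R y) \<le> ereal (1 - t) * phi \<psi> q x + ereal t * phi \<psi> q y"
    unfolding phi_eq_INF_phi_objective
  proof (rule le_convex_comb_INF[OF t])
    fix p0 p1 assume p0: "p0 \<in> P2x x" and p1: "p1 \<in> P2x y"
    have "(INF p\<in>P2x ((1 - t) *\<^sub>R x + t *\<^sub>R y). phi_objective \<psi> q p) \<le> phi_objective \<psi> q (mix_measure t p0 p1)"
      using mix_measure_in_P2x[OF p0 p1] t by (intro INF_lower) auto
    also have "\<dots> \<le> ereal (1 - t) * phi_objective \<psi> q p0 + ereal t * phi_objective \<psi> q p1"
      using p0 p1 q t \<psi> by (intro phi_objective_mix_measure_le) (auto simp: P2x_def)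
    finally show "(INF p\<in>P2x ((1 - t) *\<^sub>R x + t *\<^sub>R y). phi_objective \<psi> q p)
        \<le> ereal (1 - t) * phi_objective \<psi> q p0 + ereal t * phi_objective \<psi> q p1" .
  qed
qed

lemma edom_subset_edom_phi:
  fixes \<psi> :: "'a::euclidean_space \<Rightarrow> ereal"
  assumes \<psi>: "\<psi> \<in> borel_measurable borel"
  shows "edom \<psi> \<subseteq> edom (phi \<psi> q)"
proof
  fix x assume x: "x \<in> edom \<psi>"
  have "phi \<psi> q x \<le> phi_objective \<psi> q (return borel x)"
    unfolding phi_eq_INF_phi_objective using return_in_P2x by (rule INF_lower)
  also have "\<dots> = \<psi> x - ereal (MCov (return borel x) q)"
    using \<psi> by (simp add: phi_objective_def ext_integral_return)
  also have "\<dots> < \<infinity>"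
    using x by (cases "\<psi> x") (auto simp: edom_def)
  finally show "x \<in> edom (phi \<psi> q)"
    by (simp add: edom_def)
qed

theorem lemma3p1:
  fixes q :: "'a::euclidean_space measure" and \<psi> :: "'a \<Rightarrow> ereal"
  assumes "q \<in> P2" and "no_mass_small_sets q"
    and "\<forall>x. \<psi> x > -\<infinity>" and "edom \<psi> \<noteq> {}" and "ext_lsc \<psi>" and "ext_convex \<psi>"
  shows "ext_convex_on (edom \<psi>) (phi \<psi> q) \<and>
         ((\<exists>x\<in>interior (edom \<psi>). phi \<psi> q x > -\<infinity>) \<longrightarrow>
           (\<forall>x\<in>interior (edom \<psi>). phi \<psi> q x > -\<infinity>))"
proof -
  have \<psi>: "\<psi> \<in> borel_measurable borel"
    using assms(5) by (rule ext_lsc_borel_measurable)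
  have phi: "ext_convex (phi \<psi> q)"
    using assms(1) \<psi> by (rule ext_convex_phi)
  have "ext_convex_on (edom \<psi>) (phi \<psi> q)"
    using phi convex_edom[OF assms(6)] by (rule ext_convex_imp_ext_convex_on)
  moreover have "phi \<psi> q x > -\<infinity>" if "x0 \<in> interior (edom \<psi>)" "phi \<psi> q x0 > -\<infinity>" for x x0
    using ext_convex_greater_MInfty[OF phi] interior_mono[OF edom_subset_edom_phi[OF \<psi>]] that by blast
  ultimately show ?thesis
    by blast
qed

end
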